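(* Fix an integer $b\ge2$, $\gamma\in(0,1)$, let $\phi$ be a real analytic $\mathbb{Z}$-periodic function satisfying condition (H), and assume $\alpha<\min\{1,\frac{\log b}{\log(1/\gamma)}\}$. Then there exist $x_2\in[0,1]$ and $\mathbf{u}\in\Sigma$ with $S'(x_2,\mathbf{u})\neq0$.
   Context: $\Lambda=\{0,\dots,b-1\}$, $\Sigma=\Lambda^{\mathbb{Z}_+}$, $\nu$ uniform on $\Lambda$. $S(x,\mathbf{j})=\sum_{n\ge1}\gamma^{n-1}\phi\big(\frac{x+j_1+j_2b+\cdots+j_nb^{n-1}}{b^n}\big)$ and $S'$ denotes the derivative in $x$. Condition (H): for all $\mathbf{i}\neq\mathbf{j}\in\Sigma$, $x\mapsto S(x,\mathbf{j})-S(x,\mathbf{i})$ is not identically zero. $\alpha$ is the constant such that for Lebesgue-a.e. $x$, the image $m_x$ of $\nu^{\mathbb{Z}_+}$ under $\mathbf{j}\mapsto S(x,\mathbf{j})$ is exact dimensional with dimension $\alpha$. *)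

theory Defs
  imports "HOL-Probability.Probability"
begin

text \<open>Sequences j = (j_1, j_2, ...) are encoded as functions nat => nat with
  j k representing j_(k+1). The symbolic space Sigma = Lambda^(Z_+).\<close>

definition Sigma_b :: "nat \<Rightarrow> (nat \<Rightarrow> nat) set" where
  "Sigma_b b = {j. \<forall>k. j k < b}"

text \<open>S(x,j) = sum_(n>=1) gamma^(n-1) phi((x + j_1 + j_2 b + ... + j_n b^(n-1)) / b^n).\<close>

definition S_fun :: "nat \<Rightarrow> real \<Rightarrow> (real \<Rightarrow> real) \<Rightarrow> real \<Rightarrow> (nat \<Rightarrow> nat) \<Rightarrow> real" where
  "S_fun b \<gamma> \<phi> x j =
     (\<Sum>n. \<gamma> ^ n * \<phi> ((x + (\<Sum>k<Suc n. real (j k) * real b ^ k)) / real b ^ Suc n))"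

definition bernoulli_b :: "nat \<Rightarrow> (nat \<Rightarrow> nat) measure" where
  "bernoulli_b b = (\<Pi>\<^sub>M k\<in>UNIV. measure_pmf (pmf_of_set {..<b}))"

definition proj_measure :: "nat \<Rightarrow> real \<Rightarrow> (real \<Rightarrow> real) \<Rightarrow> real \<Rightarrow> real measure" where
  "proj_measure b \<gamma> \<phi> x = distr (bernoulli_b b) borel (\<lambda>j. S_fun b \<gamma> \<phi> x j)"

definition exact_dimensional :: "real measure \<Rightarrow> real \<Rightarrow> bool" where
  "exact_dimensional \<mu> a \<longleftrightarrow>
     (AE y in \<mu>. ((\<lambda>r. ln (measure \<mu> (ball y r)) / ln r) \<longlongrightarrow> a) (at_right 0))"

definition real_analytic :: "(real \<Rightarrow> real) \<Rightarrow> bool" where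
  "real_analytic f \<longleftrightarrow>
     (\<forall>x0. \<exists>r>0. \<exists>c::nat \<Rightarrow> real. \<forall>y. \<bar>y - x0\<bar> < r \<longrightarrow>
        (\<lambda>n. c n * (y - x0) ^ n) sums f y)"

definition condition_H :: "nat \<Rightarrow> real \<Rightarrow> (real \<Rightarrow> real) \<Rightarrow> bool" where
  "condition_H b \<gamma> \<phi> \<longleftrightarrow>
     (\<forall>i\<in>Sigma_b b. \<forall>j\<in>Sigma_b b. i \<noteq> j \<longrightarrow>
        (\<lambda>x. S_fun b \<gamma> \<phi> x j - S_fun b \<gamma> \<phi> x i) \<noteq> (\<lambda>x. 0))"

end

(* If S'(x,u) vanished for every x in [0,1] and every u, each S(-,u) would be constant on
   [0,1] (S is differentiable termwise since phi is analytic and periodic, hence C^1 with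
   bounded derivative). The self-similarity S(x,u) = phi((x+u_1)/b) + gamma S((x+u_1)/b, shift u),
   applied with u = (k,0,0,...), then makes phi constant on each [k/b,(k+1)/b], so phi is
   constant by periodicity and all S(-,u) coincide, contradicting (H). *)

theory Submission
  imports Defs "HOL-Library.Periodic_Fun"
begin

lemma real_analytic_DERIV_and_isCont_deriv:
  assumes "real_analytic f"
  shows "(f has_real_derivative deriv f x) (at x)" and "isCont (deriv f) x"
proof -
  obtain r c where r: "r > 0"
    and c: "\<And>y. \<bar>y - x\<bar> < r \<Longrightarrow> (\<lambda>n. c n * (y - x) ^ n) sums f y"
    using assms unfolding real_analytic_def by blast
  define h where "h z = (\<Sum>n. diffs c n * z ^ n)" for z :: real
  have summable_c: "summable (\<lambda>n. c n * z ^ n)" if "norm z < r" for z :: real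
    using c[of "x + z"] that by (auto simp: sums_iff)
  have DERIV_f: "(f has_real_derivative h (y - x)) (at y)" if y: "y \<in> ball x r" for y
  proof -
    have "((\<lambda>z. \<Sum>n. c n * z ^ n) has_real_derivative h (y - x)) (at (y - x))"
      unfolding h_def using y by (intro termdiffs_strong' summable_c) (auto simp: dist_real_def)
    then have "((\<lambda>t. \<Sum>n. c n * (t - x) ^ n) has_real_derivative h (y - x)) (at y)"
      using DERIV_shift[of _ _ y "- x"] by simp
    then show ?thesis
      by (rule has_field_derivative_transform_within_open[where S="ball x r"])
         (use y c in \<open>auto simp: sums_iff dist_real_def\<close>)
  qed
  have deriv_f: "deriv f y = h (y - x)" if "y \<in> ball x r" for y
    using DERIV_f[OF that] by (rule DERIV_imp_deriv)
  show "(f has_real_derivative deriv f x) (at x)"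
    using DERIV_f[of x] deriv_f[of x] r by simp
  have "summable (\<lambda>n. diffs c n * (r / 2) ^ n)"
    by (rule termdiff_converges[of _ r]) (use r summable_c in auto)
  then have "isCont h 0"
    unfolding h_def by (rule isCont_powser) (use r in auto)
  then have "isCont (\<lambda>y. h (y - x)) x"
    by (auto intro: isCont_o2[where f="\<lambda>y. y - x"])
  moreover have "\<forall>\<^sub>F y in nhds x. deriv f y = h (y - x)"
    unfolding eventually_nhds using r deriv_f by (intro exI[of _ "ball x r"]) auto
  ultimately show "isCont (deriv f) x"
    using isCont_cong by metis
qed

lemma periodic_deriv_periodic:
  fixes f f' :: "real \<Rightarrow> real"
  assumes "\<And>x. f (x + 1) = f x" and "\<And>y. (f has_real_derivative f' y) (at y)"
  shows "f' (x + 1) = f' x"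
proof -
  have "((\<lambda>t. f (t + 1)) has_real_derivative f' (x + 1)) (at x)"
    using assms(2)[of "x + 1"] DERIV_shift by blast
  then have "(f has_real_derivative f' (x + 1)) (at x)"
    using assms(1) by simp
  then show ?thesis
    using assms(2) by (rule DERIV_unique)
qed

lemma periodic_continuous_bounded:
  fixes f :: "real \<Rightarrow> real"
  assumes "\<And>x. f (x + 1) = f x" and "\<And>x. isCont f x"
  obtains B where "\<And>x. \<bar>f x\<bar> \<le> B"
proof -
  interpret periodic_fun_simple' f
    using assms(1) by unfold_locales
  have "compact (f ` {0..1})"
    using assms(2) by (intro compact_continuous_image continuous_at_imp_continuous_on) auto
  then obtain B where B: "\<And>y. y \<in> {0..1} \<Longrightarrow> \<bar>f y\<bar> \<le> B"
    by (fastforce dest: compact_imp_bounded simp: bounded_iff)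
  have "\<bar>f x\<bar> \<le> B" for x
  proof -
    have "f x = f (frac x + of_int \<lfloor>x\<rfloor>)"
      by (simp add: frac_def)
    also have "\<dots> = f (frac x)"
      by (rule plus_of_int)
    finally show ?thesis
      using B[of "frac x"] frac_ge_0[of x] frac_lt_1[of x] by simp
  qed
  then show thesis by (rule that)
qed

lemma summable_power_mult_bounded:
  fixes \<gamma> :: real
  assumes "\<bar>\<gamma>\<bar> < 1" and "\<And>n. \<bar>a n\<bar> \<le> B"
  shows "summable (\<lambda>n. \<gamma> ^ n * a n)"
proof (rule summable_comparison_test')
  show "summable (\<lambda>n. \<bar>\<gamma>\<bar> ^ n * B)"
    using assms(1) by (intro summable_mult2 summable_geometric) auto
  show "norm (\<gamma> ^ n * a n) \<le> \<bar>\<gamma>\<bar> ^ n * B" for n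
    using assms(2)[of n] by (simp add: abs_mult power_abs mult_left_mono)
qed

text \<open>The inverse branch \<open>x \<mapsto> (x + j\<^sub>1 + j\<^sub>2 b + \<dots> + j\<^sub>n b\<^bsup>n-1\<^esup>) / b\<^sup>n\<close>
  of \<open>x \<mapsto> b\<^sup>n x mod 1\<close>; as in \<open>S_fun\<close>, index \<open>n\<close> stands for the paper's \<open>n + 1\<close>.\<close>

definition inv_branch :: "nat \<Rightarrow> (nat \<Rightarrow> nat) \<Rightarrow> nat \<Rightarrow> real \<Rightarrow> real" where
  "inv_branch b u n x = (x + (\<Sum>k<Suc n. real (u k) * real b ^ k)) / real b ^ Suc n"

lemma S_fun_eq_inv_branch: "S_fun b \<gamma> \<phi> x u = (\<Sum>n. \<gamma> ^ n * \<phi> (inv_branch b u n x))"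
  by (simp add: S_fun_def inv_branch_def)

lemma inv_branch_0: "inv_branch b u 0 x = (x + real (u 0)) / real b"
  by (simp add: inv_branch_def)

lemma inv_branch_Suc:
  assumes "b > 0"
  shows "inv_branch b u (Suc n) x = inv_branch b (\<lambda>k. u (Suc k)) n (inv_branch b u 0 x)"
proof -
  have "(\<Sum>k<Suc (Suc n). real (u k) * real b ^ k)
      = real (u 0) + real b * (\<Sum>k<Suc n. real (u (Suc k)) * real b ^ k)"
    by (subst sum.lessThan_Suc_shift) (simp add: sum_distrib_left algebra_simps)
  then show ?thesis
    using assms by (simp add: inv_branch_def field_simps)
qed

lemma inv_branch_has_real_derivative:
  "(inv_branch b u n has_real_derivative 1 / real b ^ Suc n) (at x)"
  unfolding inv_branch_def[abs_def]
  by (rule DERIV_cdivide) (auto intro!: derivative_eq_intros)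

lemma S_fun_unfold:
  assumes "b > 0" and "\<bar>\<gamma>\<bar> < 1" and "\<And>y. \<bar>\<phi> y\<bar> \<le> B"
  shows "S_fun b \<gamma> \<phi> x u = \<phi> ((x + real (u 0)) / real b)
           + \<gamma> * S_fun b \<gamma> \<phi> ((x + real (u 0)) / real b) (\<lambda>k. u (Suc k))"
proof -
  define y where "y = inv_branch b u 0 x"
  have "summable (\<lambda>n. \<gamma> ^ n * \<phi> (inv_branch b u n x))"
    using assms(2,3) by (rule summable_power_mult_bounded)
  from suminf_split_head[OF this]
  have "S_fun b \<gamma> \<phi> x u = \<phi> y + (\<Sum>n. \<gamma> ^ Suc n * \<phi> (inv_branch b u (Suc n) x))"
    by (simp only: S_fun_eq_inv_branch y_def) simp
  also have "(\<Sum>n. \<gamma> ^ Suc n * \<phi> (inv_branch b u (Suc n) x))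
      = \<gamma> * (\<Sum>n. \<gamma> ^ n * \<phi> (inv_branch b (\<lambda>k. u (Suc k)) n y))"
    using suminf_mult[OF summable_power_mult_bounded[OF assms(2,3)]] assms(1)
    by (simp add: inv_branch_Suc y_def mult.assoc)
  finally show ?thesis
    by (simp add: S_fun_eq_inv_branch y_def inv_branch_0)
qed

lemma S_fun_has_real_derivative:
  fixes \<phi> \<phi>' :: "real \<Rightarrow> real"
  assumes "b \<ge> 1" and "\<bar>\<gamma>\<bar> < 1"
    and "\<And>y. (\<phi> has_real_derivative \<phi>' y) (at y)"
    and "\<And>y. \<bar>\<phi> y\<bar> \<le> B" and "\<And>y. \<bar>\<phi>' y\<bar> \<le> B'"
  shows "((\<lambda>t. S_fun b \<gamma> \<phi> t u) has_real_derivative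
           (\<Sum>n. \<gamma> ^ n * (\<phi>' (inv_branch b u n x) * (1 / real b ^ Suc n)))) (at x)"
proof -
  define f where "f n t = \<gamma> ^ n * \<phi> (inv_branch b u n t)" for n t
  define f' where "f' n t = \<gamma> ^ n * (\<phi>' (inv_branch b u n t) * (1 / real b ^ Suc n))" for n t
  have "(f n has_real_derivative f' n t) (at t)" for n t
    unfolding f_def f'_def
    by (intro DERIV_cmult DERIV_chain2[OF assms(3)] inv_branch_has_real_derivative)
  moreover have "uniformly_convergent_on UNIV (\<lambda>n t. \<Sum>i<n. f' i t)"
  proof (rule Weierstrass_m_test')
    show "summable (\<lambda>n. \<bar>\<gamma>\<bar> ^ n * B')"
      using assms(2) by (intro summable_mult2 summable_geometric) auto
    fix n t
    have "1 / real b ^ Suc n \<le> 1"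
      using assms(1) one_le_power[of "real b" "Suc n"] by simp
    then have "\<bar>\<phi>' (inv_branch b u n t)\<bar> * (1 / real b ^ Suc n) \<le> B' * 1"
      using assms(5) order_trans[OF abs_ge_zero assms(5)] by (intro mult_mono) auto
    then have "\<bar>\<gamma>\<bar> ^ n * (\<bar>\<phi>' (inv_branch b u n t)\<bar> * (1 / real b ^ Suc n)) \<le> \<bar>\<gamma>\<bar> ^ n * B'"
      by (intro mult_left_mono) auto
    then show "norm (f' n t) \<le> \<bar>\<gamma>\<bar> ^ n * B'"
      by (simp add: f'_def abs_mult power_abs)
  qed
  moreover have "summable (\<lambda>n. f n 0)"
    unfolding f_def using assms(2,4) by (rule summable_power_mult_bounded)
  ultimately have "((\<lambda>t. \<Sum>n. f n t) has_real_derivative (\<Sum>n. f' n x)) (at x)"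
    by (intro has_field_derivative_series'(2)[of UNIV]) auto
  then show ?thesis
    by (simp add: S_fun_eq_inv_branch f_def f'_def)
qed

lemma S_fun_of_constant:
  assumes "\<And>y. \<phi> y = c" and "\<bar>\<gamma>\<bar> < 1"
  shows "S_fun b \<gamma> \<phi> x u = c / (1 - \<gamma>)"
proof -
  have "(\<lambda>n. \<gamma> ^ n * c) sums (1 / (1 - \<gamma>) * c)"
    using assms(2) by (intro sums_mult2 geometric_sums) auto
  then show ?thesis
    by (simp add: S_fun_def assms(1) sums_iff)
qed

lemma condition_H_imp_nonconstant:
  assumes "b \<ge> 2" and "\<bar>\<gamma>\<bar> < 1" and "condition_H b \<gamma> \<phi>"
  shows "\<not> (\<forall>y. \<phi> y = c)"
proof
  assume "\<forall>y. \<phi> y = c"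
  then have S_const: "S_fun b \<gamma> \<phi> x u = c / (1 - \<gamma>)" for x u
    using assms(2) by (intro S_fun_of_constant) auto
  define i :: "nat \<Rightarrow> nat" where "i = (\<lambda>_. 0)"
  define j :: "nat \<Rightarrow> nat" where "j = (\<lambda>k. if k = 0 then 1 else 0)"
  have "i \<in> Sigma_b b" "j \<in> Sigma_b b" "i \<noteq> j"
    using assms(1) by (auto simp: i_def j_def Sigma_b_def fun_eq_iff)
  with assms(3) have "(\<lambda>x. S_fun b \<gamma> \<phi> x j - S_fun b \<gamma> \<phi> x i) \<noteq> (\<lambda>x. 0)"
    unfolding condition_H_def by blast
  then show False
    by (simp add: S_const)
qed

lemma S_fun_constant_imp_phi_constant_on_digit_interval:
  assumes "b > 0" and "\<bar>\<gamma>\<bar> < 1" and "\<And>y. \<bar>\<phi> y\<bar> \<le> B"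
    and S_const: "\<And>u x. u \<in> Sigma_b b \<Longrightarrow> x \<in> {0..1} \<Longrightarrow> S_fun b \<gamma> \<phi> x u = S_fun b \<gamma> \<phi> 0 u"
    and "k < b" and "x \<in> {0..1}"
  shows "\<phi> ((x + real k) / real b) = \<phi> (real k / real b)"
proof -
  define u :: "nat \<Rightarrow> nat" where "u = (\<lambda>i. if i = 0 then k else 0)"
  define zero :: "nat \<Rightarrow> nat" where "zero = (\<lambda>_. 0)"
  have u: "u \<in> Sigma_b b" and zero: "zero \<in> Sigma_b b"
    using assms(1,5) by (auto simp: u_def zero_def Sigma_b_def)
  have \<phi>_eq: "\<phi> ((t + real k) / real b) = S_fun b \<gamma> \<phi> 0 u - \<gamma> * S_fun b \<gamma> \<phi> 0 zero"
    if t: "t \<in> {0..1}" for t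
  proof -
    have "(t + real k) / real b \<in> {0..1}"
      using t assms(1,5) by (auto simp: divide_le_eq)
    from S_const[OF zero this]
    have "S_fun b \<gamma> \<phi> ((t + real k) / real b) (\<lambda>i. u (Suc i)) = S_fun b \<gamma> \<phi> 0 zero"
      by (simp add: u_def zero_def)
    moreover have "S_fun b \<gamma> \<phi> t u = \<phi> ((t + real k) / real b)
        + \<gamma> * S_fun b \<gamma> \<phi> ((t + real k) / real b) (\<lambda>i. u (Suc i))"
      using S_fun_unfold[OF assms(1-3), where x=t and u=u] by (simp add: u_def)
    ultimately show ?thesis
      using S_const[OF u t] by simp
  qed
  show ?thesis
    using \<phi>_eq[OF assms(6)] \<phi>_eq[of 0] by simp
qed

lemma S_fun_constant_imp_phi_constant:
  assumes "b > 0" and "\<bar>\<gamma>\<bar> < 1" and "\<And>y. \<bar>\<phi> y\<bar> \<le> B"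
    and periodic: "\<And>x. \<phi> (x + 1) = \<phi> x"
    and S_const: "\<And>u x. u \<in> Sigma_b b \<Longrightarrow> x \<in> {0..1} \<Longrightarrow> S_fun b \<gamma> \<phi> x u = S_fun b \<gamma> \<phi> 0 u"
  shows "\<phi> y = \<phi> 0"
proof -
  note digit_interval = S_fun_constant_imp_phi_constant_on_digit_interval[OF assms(1-3) S_const]
  have grid: "\<phi> (real k / real b) = \<phi> 0" if "k \<le> b" for k
    using that
  proof (induction k)
    case (Suc k)
    then have "\<phi> (real (Suc k) / real b) = \<phi> (real k / real b)"
      using digit_interval[of k 1] digit_interval[of k 0] by (simp add: add.commute)
    with Suc show ?case by simp
  qed simp
  have unit_interval: "\<phi> t = \<phi> 0" if t: "0 \<le> t" "t < 1" for t
  proof -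
    define k where "k = nat \<lfloor>real b * t\<rfloor>"
    have k: "real k \<le> real b * t" "real b * t < real k + 1"
      using t assms(1) by (auto simp: k_def)
    then have "k < b"
      using t assms(1) mult_strict_left_mono[of t 1 "real b"] by linarith
    have "t = ((real b * t - real k) + real k) / real b"
      using assms(1) by simp
    also have "\<phi> \<dots> = \<phi> (real k / real b)"
      using k \<open>k < b\<close> by (intro digit_interval) auto
    finally show ?thesis
      using grid \<open>k < b\<close> by simp
  qed
  interpret periodic_fun_simple' \<phi>
    using periodic by unfold_locales
  have "\<phi> y = \<phi> (frac y + of_int \<lfloor>y\<rfloor>)"
    by (simp add: frac_def)
  also have "\<dots> = \<phi> (frac y)"
    by (rule plus_of_int)
  also have "\<dots> = \<phi> 0"
    using frac_ge_0[of y] frac_lt_1[of y] by (rule unit_interval)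
  finally show ?thesis .
qed

theorem lemma6p2:
  fixes b :: nat and \<gamma> :: real and \<phi> :: "real \<Rightarrow> real" and \<alpha> :: real
  assumes "b \<ge> 2"
    and "0 < \<gamma>" and "\<gamma> < 1"
    and "real_analytic \<phi>"
    and "\<forall>x. \<phi> (x + 1) = \<phi> x"
    and "condition_H b \<gamma> \<phi>"
    and "AE x in lborel. exact_dimensional (proj_measure b \<gamma> \<phi> x) \<alpha>"
    and "\<alpha> < min 1 (ln (real b) / ln (1 / \<gamma>))"
  shows "\<exists>x2\<in>{0..1}. \<exists>u\<in>Sigma_b b. \<exists>d. ((\<lambda>t. S_fun b \<gamma> \<phi> t u) has_real_derivative d) (at x2) \<and> d \<noteq> 0"
proof (rule ccontr)
  assume no_nonzero_derivative: "\<not> ?thesis"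
  have b: "b \<ge> 1" and \<gamma>: "\<bar>\<gamma>\<bar> < 1" and periodic: "\<And>x. \<phi> (x + 1) = \<phi> x"
    using assms(1-3,5) by auto
  note \<phi>' = real_analytic_DERIV_and_isCont_deriv[OF assms(4)]
  obtain B where B: "\<And>y. \<bar>\<phi> y\<bar> \<le> B"
    using periodic_continuous_bounded[of \<phi>] periodic \<phi>'(1) DERIV_isCont by blast
  moreover obtain B' where "\<And>y. \<bar>deriv \<phi> y\<bar> \<le> B'"
    using periodic_continuous_bounded[of "deriv \<phi>"] periodic_deriv_periodic[OF periodic \<phi>'(1)] \<phi>'(2) by blast
  ultimately have S_differentiable: "\<exists>d. ((\<lambda>t. S_fun b \<gamma> \<phi> t u) has_real_derivative d) (at x)" for u x
    using S_fun_has_real_derivative[OF b \<gamma> \<phi>'(1)] by blast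
  have S_const: "S_fun b \<gamma> \<phi> x u = S_fun b \<gamma> \<phi> 0 u" if "u \<in> Sigma_b b" "x \<in> {0..1}" for u x
  proof (rule DERIV_isconst2[of 0 1])
    show "continuous_on {0..1} (\<lambda>t. S_fun b \<gamma> \<phi> t u)"
      using S_differentiable DERIV_isCont by (blast intro: continuous_at_imp_continuous_on)
    show "((\<lambda>t. S_fun b \<gamma> \<phi> t u) has_real_derivative 0) (at t)" if "0 < t" "t < 1" for t
      using S_differentiable[of u t] no_nonzero_derivative \<open>u \<in> Sigma_b b\<close> that by fastforce
  qed (use that in auto)
  have "\<phi> y = \<phi> 0" for y
    using b by (intro S_fun_constant_imp_phi_constant[of b \<gamma> \<phi> B, OF _ \<gamma> B periodic S_const]) auto
  then show False
    using condition_H_imp_nonconstant[OF assms(1) \<gamma> assms(6)] by blast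
qed

end
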